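(* Let $d\le p$ be positive integers, let $\mathcal{U}\subset\mathbb{R}^p$ be a nonempty closed convex cone, let $G$ be a real $d\times p$ matrix with $\{Gu:u\in\mathcal{U}\}=\mathbb{R}^d$, and let $\kappa\in\mathbb{R}^p$. Let $\mathcal{U}_1=\{u\in\mathcal{U}:|Gu|=1\}$ and $\mathcal{H}(q)=\sup_{u\in\mathcal{U}_1}\{-Gu\cdot q-\kappa\cdot u\}$, $q\in\mathbb{R}^d$. Suppose that (a) $\{u\in\mathcal{U}:Gu=0\text{ and }\kappa\cdot u\le0\}=\{0\}$, and (b) there exists a unit vector $u_1\in\mathbb{R}^p$ such that $\inf_{u\in\mathcal{U}_1}u_1\cdot u>0$. Then $\inf_{q\in\mathbb{R}^d}\mathcal{H}(q)<0$.
   Context: $|\cdot|$ denotes the Euclidean norm. *)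

theory Defs
  imports "HOL-Analysis.Analysis"
begin

definition U1 :: "(real^'p) set \<Rightarrow> real^'p^'d \<Rightarrow> (real^'p) set" where
  "U1 U G = {u \<in> U. norm (G *v u) = 1}"

definition Ham :: "(real^'p) set \<Rightarrow> real^'p^'d \<Rightarrow> real^'p \<Rightarrow> real^'d \<Rightarrow> ereal" where
  "Ham U G \<kappa> q = (SUP u\<in>U1 U G. ereal (- ((G *v u) \<bullet> q) - \<kappa> \<bullet> u))"

end

theory Submission
  imports Defs
begin

text \<open>
  Rescaling by \<open>|Gu|\<close>, hypothesis (b) makes \<open>u\<^sub>1\<close> positive on every \<open>u \<in> U\<close> with
  \<open>Gu \<noteq> 0\<close>, hence nonnegative on all of \<open>U\<close>; together with (a), compactness of
  \<open>U\<close> intersected with the unit sphere gives a functional \<open>e = u\<^sub>1 + t\<kappa>\<close> that is strictly positive on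
  \<open>U - {0}\<close>. So the convex hull of that intersection is a compact convex subset of \<open>U\<close>
  avoiding \<open>0\<close>, and by (a) its image under \<open>u \<mapsto> (Gu, \<kappa>\<cdot>u)\<close> misses the ray
  \<open>{0} \<times> (-\<infinity>, 0]\<close>. A separating hyperplane \<open>(q, s)\<close> has \<open>s < 0\<close> because \<open>G\<close> maps
  \<open>U\<close> onto \<open>\<real>\<^sup>d\<close>; after rescaling, \<open>Gu\<cdot>q + \<kappa>\<cdot>u \<ge> c|u|\<close> on \<open>U\<close>, and since
  \<open>|u| \<ge> 1/\<parallel>G\<parallel>\<close> on \<open>U\<^sub>1\<close> this gives \<open>H(q) \<le> -c/\<parallel>G\<parallel> < 0\<close>.
\<close>

lemma cone_inner_pos_if_pos_on_unit_image:
  fixes f :: "'a::real_inner \<Rightarrow> 'b::real_normed_vector"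
  assumes "cone U" "linear f"
    and pos: "\<And>v. v \<in> U \<Longrightarrow> norm (f v) = 1 \<Longrightarrow> a \<bullet> v > 0"
    and "u \<in> U" "f u \<noteq> 0"
  shows "a \<bullet> u > 0"
proof -
  define r where "r = 1 / norm (f u)"
  have "r > 0" using \<open>f u \<noteq> 0\<close> by (simp add: r_def)
  moreover have "r *\<^sub>R u \<in> U"
    using \<open>cone U\<close> \<open>u \<in> U\<close> \<open>r > 0\<close> by (simp add: cone_def)
  moreover have "norm (f (r *\<^sub>R u)) = 1"
    using \<open>f u \<noteq> 0\<close> by (simp add: linear_scale[OF \<open>linear f\<close>] r_def)
  ultimately have "r * (a \<bullet> u) > 0" using pos by fastforce
  with \<open>r > 0\<close> show ?thesis by (simp add: zero_less_mult_iff)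
qed

lemma convex_cone_inner_nonneg:
  fixes f :: "'a::real_inner \<Rightarrow> 'b::real_vector"
  assumes "convex U" "cone U" "linear f"
    and pos: "\<And>u. u \<in> U \<Longrightarrow> f u \<noteq> 0 \<Longrightarrow> a \<bullet> u > 0"
    and "v \<in> U" "f v \<noteq> 0" "u \<in> U"
  shows "a \<bullet> u \<ge> 0"
proof (rule ccontr)
  assume neg: "\<not> a \<bullet> u \<ge> 0"
  with pos \<open>u \<in> U\<close> have "f u = 0" by force
  define n where "n = (\<bar>a \<bullet> v\<bar> + 1) / - (a \<bullet> u)"
  have "n \<ge> 0" unfolding n_def using neg by (intro divide_nonneg_pos) auto
  then have "v + n *\<^sub>R u \<in> U"
    using \<open>convex U\<close> \<open>cone U\<close> \<open>u \<in> U\<close> \<open>v \<in> U\<close> convex_cone[of U] by blast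
  moreover have "f (v + n *\<^sub>R u) = f v"
    using \<open>f u = 0\<close> by (simp add: linear_add[OF \<open>linear f\<close>] linear_scale[OF \<open>linear f\<close>])
  ultimately have "a \<bullet> v + n * (a \<bullet> u) > 0"
    using pos \<open>f v \<noteq> 0\<close> by (fastforce simp: inner_add_right)
  moreover have "n * (a \<bullet> u) = - (\<bar>a \<bullet> v\<bar> + 1)" using neg by (simp add: n_def)
  ultimately show False by linarith
qed

lemma compact_pos_combination:
  fixes f g :: "'a::t2_space \<Rightarrow> real"
  assumes "compact W" "continuous_on W f" "continuous_on W g"
    and f_nonneg: "\<And>w. w \<in> W \<Longrightarrow> f w \<ge> 0"
    and f_or_g_pos: "\<And>w. w \<in> W \<Longrightarrow> f w > 0 \<or> g w > 0"
  shows "\<exists>t>0. \<forall>w\<in>W. f w + t * g w > 0"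
proof -
  define W0 where "W0 = W \<inter> g -` {..0}"
  show ?thesis
  proof (cases "W0 = {}")
    case True
    then have "\<forall>w\<in>W. f w + 1 * g w > 0" using f_nonneg by (force simp: W0_def)
    then show ?thesis using zero_less_one by blast
  next
    case False
    have "closed W0" unfolding W0_def
      using assms(1,3) by (intro continuous_closed_preimage compact_imp_closed closed_atMost)
    then have "compact W0"
      using compact_Int_closed[OF assms(1)] by (metis W0_def Int_absorb1 inf_le1)
    obtain w0 where w0: "w0 \<in> W0" "\<And>w. w \<in> W0 \<Longrightarrow> f w0 \<le> f w"
      using continuous_attains_inf[OF \<open>compact W0\<close> False] assms(2) W0_def
      by (metis continuous_on_subset inf_le1)
    have m: "f w0 > 0" using w0(1) f_or_g_pos by (force simp: W0_def)
    obtain w1 where w1: "\<And>w. w \<in> W \<Longrightarrow> g w1 \<le> g w"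
      using continuous_attains_inf[OF assms(1) _ assms(3)] False by (auto simp: W0_def)
    define M where "M = \<bar>g w1\<bar>"
    define t where "t = f w0 / (M + 1)"
    have "t > 0" using m by (simp add: t_def M_def)
    have "t * M < f w0"
      using m by (simp add: t_def M_def field_simps)
    have "f w + t * g w > 0" if "w \<in> W" for w
    proof (cases "w \<in> W0")
      case True
      have "- M \<le> g w" using w1[OF that] by (simp add: M_def)
      then have "- (t * M) \<le> t * g w"
        using \<open>t > 0\<close> mult_left_mono[of "- M" "g w" t] by simp
      then show ?thesis using w0(2)[OF True] \<open>t * M < f w0\<close> by linarith
    next
      case False
      then show ?thesis using that f_nonneg \<open>t > 0\<close> by (simp add: W0_def add_nonneg_pos)
    qed
    then show ?thesis using \<open>t > 0\<close> by blast
  qed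
qed

lemma closed_convex_cone_pointed:
  fixes U :: "'a::euclidean_space set" and f :: "'a \<Rightarrow> 'b::real_vector"
  assumes "closed U" "convex U" "cone U" "linear f"
    and pos: "\<And>u. u \<in> U \<Longrightarrow> f u \<noteq> 0 \<Longrightarrow> a \<bullet> u > 0"
    and "v \<in> U" "f v \<noteq> 0"
    and ker: "\<And>u. u \<in> U \<Longrightarrow> f u = 0 \<Longrightarrow> \<kappa> \<bullet> u \<le> 0 \<Longrightarrow> u = 0"
  shows "\<exists>e. \<forall>u\<in>U. u \<noteq> 0 \<longrightarrow> e \<bullet> u > 0"
proof -
  define W where "W = U \<inter> sphere 0 1"
  have "compact W" unfolding W_def using \<open>closed U\<close> by (intro closed_Int_compact compact_sphere)
  moreover have "a \<bullet> w \<ge> 0" if "w \<in> W" for w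
    using convex_cone_inner_nonneg[OF assms(2-4) pos assms(6,7)] that by (simp add: W_def)
  moreover have "a \<bullet> w > 0 \<or> \<kappa> \<bullet> w > 0" if "w \<in> W" for w
  proof -
    have "w \<in> U" "w \<noteq> 0" using that by (auto simp: W_def)
    then show ?thesis using pos ker by (cases "f w = 0") (auto simp: not_le)
  qed
  moreover have "continuous_on W (\<lambda>w. a \<bullet> w)" "continuous_on W (\<lambda>w. \<kappa> \<bullet> w)"
    by (intro continuous_intros)+
  ultimately obtain t where "\<forall>w\<in>W. a \<bullet> w + t * (\<kappa> \<bullet> w) > 0"
    using compact_pos_combination[of W "\<lambda>w. a \<bullet> w" "\<lambda>w. \<kappa> \<bullet> w"] by blast
  then have W_pos: "(a + t *\<^sub>R \<kappa>) \<bullet> w > 0" if "w \<in> W" for w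
    using that by (simp add: inner_add_left)
  have "(a + t *\<^sub>R \<kappa>) \<bullet> u > 0" if "u \<in> U" "u \<noteq> 0" for u
  proof -
    have "(1 / norm u) *\<^sub>R u \<in> W"
      using \<open>cone U\<close> that by (simp add: W_def cone_def)
    from W_pos[OF this] that show ?thesis by (simp add: zero_less_divide_iff)
  qed
  then show ?thesis by blast
qed

lemma pointed_cone_separation:
  fixes U :: "'a::euclidean_space set" and f :: "'a \<Rightarrow> 'b::euclidean_space"
  assumes "closed U" "convex U" "cone U" "linear f"
    and e: "\<And>u. u \<in> U \<Longrightarrow> u \<noteq> 0 \<Longrightarrow> e \<bullet> u > 0"
    and ker: "\<And>u. u \<in> U \<Longrightarrow> f u = 0 \<Longrightarrow> \<kappa> \<bullet> u \<le> 0 \<Longrightarrow> u = 0"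
  shows "\<exists>q s c. c > 0 \<and> s \<le> 0 \<and> (\<forall>u\<in>U. q \<bullet> f u + s * (\<kappa> \<bullet> u) \<le> - c * norm u)"
proof -
  define W where "W = U \<inter> sphere 0 1"
  have normalize: "(1 / norm u) *\<^sub>R u \<in> W" if "u \<in> U" "u \<noteq> 0" for u
    using \<open>cone U\<close> that by (simp add: W_def cone_def)
  show ?thesis
  proof (cases "W = {}")
    case True
    then have "U \<subseteq> {0}" using normalize by blast
    then show ?thesis by (intro exI[of _ 0] exI[of _ "0::real"] exI[of _ "1::real"]) auto
  next
    case False
    define B where "B = convex hull W"
    define L where "L = (\<lambda>u. (f u, \<kappa> \<bullet> u))"
    define T :: "('b \<times> real) set" where "T = {0} \<times> {..0}"
    have "bounded_linear L"
      unfolding L_def using \<open>linear f\<close>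
      by (intro bounded_linear_Pair bounded_linear_inner_right) (simp add: linear_conv_bounded_linear)
    then have "linear L" by (rule bounded_linear.linear)
    have "W \<subseteq> B" by (simp add: B_def hull_subset)
    have "B \<subseteq> U"
      unfolding B_def using \<open>convex U\<close> by (intro hull_minimal) (auto simp: W_def)
    have "B \<subseteq> {x. e \<bullet> x > 0}"
      unfolding B_def using e by (intro hull_minimal convex_halfspace_gt) (force simp: W_def)
    have "\<not> (f x = 0 \<and> \<kappa> \<bullet> x \<le> 0)" if "x \<in> B" for x
    proof
      assume "f x = 0 \<and> \<kappa> \<bullet> x \<le> 0"
      with ker that \<open>B \<subseteq> U\<close> have "x = 0" by blast
      with that \<open>B \<subseteq> {x. e \<bullet> x > 0}\<close> show False by auto
    qed
    then have "L ` B \<inter> T = {}" unfolding L_def T_def by blast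
    moreover have "compact (L ` B)"
    proof -
      have "compact W" unfolding W_def using \<open>closed U\<close> by (intro closed_Int_compact compact_sphere)
      then show ?thesis unfolding B_def using \<open>bounded_linear L\<close>
        by (intro compact_continuous_image linear_continuous_on compact_convex_hull)
    qed
    moreover have "convex (L ` B)"
      unfolding B_def by (rule convex_linear_image[OF \<open>linear L\<close> convex_convex_hull])
    moreover have "L ` B \<noteq> {}" using False \<open>W \<subseteq> B\<close> by blast
    moreover have "convex T" "closed T"
      unfolding T_def by (intro convex_Times convex_singleton convex_real_interval
          closed_Times closed_singleton closed_atMost)+
    ultimately obtain a b where "\<forall>x\<in>L ` B. a \<bullet> x < b" "\<forall>x\<in>T. a \<bullet> x > b"
      using separating_hyperplane_compact_closed[of "L ` B" T] by blast
    moreover obtain q s where "a = (q, s)" by (cases a)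
    ultimately have sepB: "\<And>x. x \<in> B \<Longrightarrow> q \<bullet> f x + s * (\<kappa> \<bullet> x) < b"
      and sepT: "\<And>t. t \<le> 0 \<Longrightarrow> s * t > b"
      by (auto simp: L_def T_def)
    have "b < 0" using sepT[of 0] by simp
    have "s \<le> 0"
    proof (rule ccontr)
      assume "\<not> s \<le> 0"
      then show False using sepT[of "b / s"] \<open>b < 0\<close> by (simp add: divide_nonpos_pos)
    qed
    have "q \<bullet> f u + s * (\<kappa> \<bullet> u) \<le> b * norm u" if "u \<in> U" for u
    proof (cases "u = 0")
      case False
      with sepB[of "(1 / norm u) *\<^sub>R u"] normalize[OF that] \<open>W \<subseteq> B\<close>
      have "(q \<bullet> f u + s * (\<kappa> \<bullet> u)) / norm u < b"
        by (auto simp: linear_scale[OF \<open>linear f\<close>] add_divide_distrib)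
      then show ?thesis using False by (simp add: divide_less_eq)
    qed (simp add: linear_0[OF \<open>linear f\<close>])
    then show ?thesis
      using \<open>b < 0\<close> \<open>s \<le> 0\<close> by (intro exI[of _ q] exI[of _ s] exI[of _ "- b"]) simp
  qed
qed

lemma pointed_cone_coercive_functional:
  fixes U :: "'a::euclidean_space set" and f :: "'a \<Rightarrow> 'b::euclidean_space"
  assumes "closed U" "convex U" "cone U" "linear f" "f ` U = UNIV"
    and e: "\<And>u. u \<in> U \<Longrightarrow> u \<noteq> 0 \<Longrightarrow> e \<bullet> u > 0"
    and ker: "\<And>u. u \<in> U \<Longrightarrow> f u = 0 \<Longrightarrow> \<kappa> \<bullet> u \<le> 0 \<Longrightarrow> u = 0"
  shows "\<exists>q c. c > 0 \<and> (\<forall>u\<in>U. c * norm u \<le> f u \<bullet> q + \<kappa> \<bullet> u)"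
proof -
  obtain q s c where "c > 0" "s \<le> 0"
    and sep: "\<And>u. u \<in> U \<Longrightarrow> q \<bullet> f u + s * (\<kappa> \<bullet> u) \<le> - c * norm u"
    using pointed_cone_separation[OF assms(1-4) e ker] by blast
  have "s \<noteq> 0"
  proof
    assume "s = 0"
    have "q \<in> f ` U" using \<open>f ` U = UNIV\<close> by simp
    then obtain u where "u \<in> U" "f u = q" by blast
    with sep[of u] \<open>s = 0\<close> have "q \<bullet> q \<le> - c * norm u" by simp
    also have "\<dots> \<le> 0" using \<open>c > 0\<close> by simp
    finally have "q \<bullet> q \<le> 0" .
    then have "q = 0" using inner_gt_zero_iff[of q] by linarith
    obtain b :: 'b where "b \<in> Basis" using nonempty_Basis by blast
    moreover have "b \<in> f ` U" using \<open>f ` U = UNIV\<close> by simp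
    ultimately obtain v where "v \<in> U" "f v \<noteq> 0" using nonzero_Basis by blast
    then have "v \<noteq> 0" using linear_0[OF \<open>linear f\<close>] by auto
    with sep[OF \<open>v \<in> U\<close>] \<open>s = 0\<close> \<open>q = 0\<close> \<open>c > 0\<close> show False
      by (simp add: mult_le_0_iff)
  qed
  with \<open>s \<le> 0\<close> have "s < 0" by simp
  have "c / - s * norm u \<le> f u \<bullet> ((1 / s) *\<^sub>R q) + \<kappa> \<bullet> u" if "u \<in> U" for u
  proof -
    have "(q \<bullet> f u + s * (\<kappa> \<bullet> u)) / s \<ge> - c * norm u / s"
      using divide_right_mono_neg[OF sep[OF that]] \<open>s < 0\<close> by simp
    then show ?thesis using \<open>s < 0\<close> by (simp add: add_divide_distrib inner_commute)
  qed
  moreover have "c / - s > 0" using \<open>c > 0\<close> \<open>s < 0\<close> by (simp add: divide_pos_neg)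
  ultimately show ?thesis by blast
qed

lemma inner_pos_if_INF_U1_pos:
  assumes "cone U" "(INF v\<in>U1 U G. ereal (a \<bullet> v)) > 0" "u \<in> U" "G *v u \<noteq> 0"
  shows "a \<bullet> u > 0"
proof (rule cone_inner_pos_if_pos_on_unit_image[OF \<open>cone U\<close> matrix_vector_mul_linear _ assms(3,4)])
  fix v assume "v \<in> U" "norm (G *v v) = 1"
  then have "(INF v\<in>U1 U G. ereal (a \<bullet> v)) \<le> ereal (a \<bullet> v)" by (intro INF_lower) (simp add: U1_def)
  with assms(2) have "0 < ereal (a \<bullet> v)" by (rule less_le_trans)
  then show "a \<bullet> v > 0" by simp
qed

lemma Ham_neg_if_coercive:
  fixes G :: "real^'p^'d"
  assumes "c > 0" and coercive: "\<And>u. u \<in> U \<Longrightarrow> c * norm u \<le> (G *v u) \<bullet> q + \<kappa> \<bullet> u"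
  shows "Ham U G \<kappa> q < 0"
proof -
  obtain K where "K > 0" and K: "\<And>u. norm (G *v u) \<le> norm u * K"
    using bounded_linear.pos_bounded[OF matrix_vector_mul_bounded_linear[of G]] by blast
  have "- ((G *v u) \<bullet> q) - \<kappa> \<bullet> u \<le> - (c / K)" if "u \<in> U1 U G" for u
  proof -
    have "1 / K \<le> norm u" using K[of u] that \<open>K > 0\<close> by (simp add: U1_def field_simps)
    then have "c / K \<le> c * norm u" using \<open>c > 0\<close> mult_left_mono[of "1/K" "norm u" c] by simp
    with coercive that show ?thesis by (fastforce simp: U1_def)
  qed
  then have "Ham U G \<kappa> q \<le> ereal (- (c / K))" unfolding Ham_def by (intro SUP_least) simp
  also have "\<dots> < 0" using \<open>c > 0\<close> \<open>K > 0\<close> by simp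
  finally show ?thesis .
qed

theorem theorem2p2:
  fixes U :: "(real^'p) set" and G :: "real^'p^'d" and \<kappa> :: "real^'p"
  assumes "CARD('d) \<le> CARD('p)"
    and "U \<noteq> {}" and "closed U" and "convex U" and "cone U"
    and "(\<lambda>u. G *v u) ` U = UNIV"
    and "{u \<in> U. G *v u = 0 \<and> \<kappa> \<bullet> u \<le> 0} = {0}"
    and "\<exists>u1::real^'p. norm u1 = 1 \<and> (INF u\<in>U1 U G. ereal (u1 \<bullet> u)) > 0"
  shows "(INF q. Ham U G \<kappa> q) < 0"
proof -
  have lin: "linear ((*v) G)" by (rule matrix_vector_mul_linear)
  have surj: "(*v) G ` U = UNIV" using assms(6) by simp
  have ker: "u = 0" if "u \<in> U" "G *v u = 0" "\<kappa> \<bullet> u \<le> 0" for u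
    using assms(7) that by blast
  obtain u1 :: "real^'p" where "(INF u\<in>U1 U G. ereal (u1 \<bullet> u)) > 0"
    using assms(8) by blast
  then have pos: "u1 \<bullet> u > 0" if "u \<in> U" "G *v u \<noteq> 0" for u
    using inner_pos_if_INF_U1_pos[OF \<open>cone U\<close>] that by blast
  obtain v where "v \<in> U" "G *v v = 1" using surj by (metis UNIV_I imageE)
  then obtain e where "\<forall>u\<in>U. u \<noteq> 0 \<longrightarrow> e \<bullet> u > 0"
    using closed_convex_cone_pointed[OF assms(3-5) lin pos, of v \<kappa>] ker by fastforce
  then obtain q c where "c > 0" "\<forall>u\<in>U. c * norm u \<le> (G *v u) \<bullet> q + \<kappa> \<bullet> u"
    using pointed_cone_coercive_functional[OF assms(3-5) lin surj, of e \<kappa>] ker by blast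
  then have "Ham U G \<kappa> q < 0" by (intro Ham_neg_if_coercive) auto
  then show ?thesis by (meson INF_lower UNIV_I order.strict_trans1)
qed

end
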